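(* Let $T$ be a term rewriting system that is disjoint and has no collapsing rules. Then every reduction sequence of $T$ is convergent (i.e. $T$ is infinitary strongly normalising, $SN^\infty$).
   Context: $T=(\Sigma,R)$ with $\Sigma$ a finite signature and $R$ a set of rules $l\to r$ over finite or infinite terms, $l$ finite and not a variable, variables of $r$ occurring in $l$. $T$ is disjoint iff the set of function symbols occurring in left-hand sides is disjoint from the set of function symbols occurring in right-hand sides. A rule $l\to r$ is collapsing iff $r$ is a variable. Terms are finite or infinite trees; $d(t,u)=0$ if $t=u$, else $2^{-k}$ with $k$ the least depth where they differ; limits w.r.t. $d$. A reduction step $a=\langle t,p,\mu,\sigma\rangle$ has $t|_p=\sigma l$, target $t[\sigma r]_p$, depth $|p|$. A reduction sequence is an empty sequence $id_t$ or a sequence $\langle a_\alpha\rangle_{\alpha<\beta}$ ($\beta>0$ an ordinal) of steps with $src(a_{\alpha+1})=tgt(a_\alpha)$ for $\alpha+1<\beta$ and, for each limit ordinal $\beta_0<\beta$: $\lim_{\alpha\to\beta_0}tgt(a_\alpha)$ exists and equals $src(a_{\beta_0})$, and for every $n<\omega$ there is $\beta'<\beta_0$ such that every $a_\alpha$ with $\beta'<\alpha<\beta_0$ has depth $>n$. It is convergent iff it is empty, $\beta$ is a successor, or $\beta$ is a limit and $\lim_{\alpha\to\beta}tgt(a_\alpha)$ exists and the depth condition also holds at $\beta$. *)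

theory Defs
  imports Complex_Main "HOL-Library.BNF_Corec"
begin

codatatype ('f, 'v) iterm = Var 'v | Fun 'f "('f, 'v) iterm list"

corec subst :: "('v \<Rightarrow> ('f, 'v) iterm) \<Rightarrow> ('f, 'v) iterm \<Rightarrow> ('f, 'v) iterm" where
  "subst \<sigma> t = (case t of Var x \<Rightarrow> \<sigma> x | Fun f ts \<Rightarrow> Fun f (map (subst \<sigma>) ts))"

primrec subt :: "('f, 'v) iterm \<Rightarrow> nat list \<Rightarrow> ('f, 'v) iterm option" where
  "subt t [] = Some t"
| "subt t (i # p) = (case t of Var x \<Rightarrow> None
     | Fun f ts \<Rightarrow> (if i < length ts then subt (ts ! i) p else None))"

primrec replace :: "('f, 'v) iterm \<Rightarrow> nat list \<Rightarrow> ('f, 'v) iterm \<Rightarrow> ('f, 'v) iterm" where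
  "replace t [] s = s"
| "replace t (i # p) s = (case t of Var x \<Rightarrow> t
     | Fun f ts \<Rightarrow> (if i < length ts then Fun f (ts[i := replace (ts ! i) p s]) else t))"

fun root :: "('f, 'v) iterm \<Rightarrow> ('f \<times> nat) + 'v" where
  "root (Var x) = Inr x"
| "root (Fun f ts) = Inl (f, length ts)"

definition lab :: "('f, 'v) iterm \<Rightarrow> nat list \<Rightarrow> (('f \<times> nat) + 'v) option" where
  "lab t p = map_option root (subt t p)"

definition dterm :: "('f, 'v) iterm \<Rightarrow> ('f, 'v) iterm \<Rightarrow> real" where
  "dterm t u = (if t = u then 0
     else (1/2) ^ (LEAST k. \<exists>p. length p = k \<and> lab t p \<noteq> lab u p))"

definition funs :: "('f, 'v) iterm \<Rightarrow> 'f set" where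
  "funs t = {f. \<exists>p ts. subt t p = Some (Fun f ts)}"

definition vars :: "('f, 'v) iterm \<Rightarrow> 'v set" where
  "vars t = {x. \<exists>p. subt t p = Some (Var x)}"

inductive finite_term :: "('f, 'v) iterm \<Rightarrow> bool" where
  "finite_term (Var x)"
| "(\<And>t. t \<in> set ts \<Longrightarrow> finite_term t) \<Longrightarrow> finite_term (Fun f ts)"

definition wf_term :: "'f set \<Rightarrow> ('f \<Rightarrow> nat) \<Rightarrow> ('f, 'v) iterm \<Rightarrow> bool" where
  "wf_term \<Sigma> ar t \<longleftrightarrow> (\<forall>p f ts. subt t p = Some (Fun f ts) \<longrightarrow> f \<in> \<Sigma> \<and> length ts = ar f)"

type_synonym ('f, 'v) rule = "('f, 'v) iterm \<times> ('f, 'v) iterm"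

definition is_trs :: "'f set \<Rightarrow> ('f \<Rightarrow> nat) \<Rightarrow> ('f, 'v) rule set \<Rightarrow> bool" where
  "is_trs \<Sigma> ar R \<longleftrightarrow> finite \<Sigma> \<and>
     (\<forall>(l, r) \<in> R. wf_term \<Sigma> ar l \<and> wf_term \<Sigma> ar r \<and> finite_term l \<and>
        (\<forall>x. l \<noteq> Var x) \<and> vars r \<subseteq> vars l)"

definition disjoint_trs :: "('f, 'v) rule set \<Rightarrow> bool" where
  "disjoint_trs R \<longleftrightarrow> (\<Union>(l, r) \<in> R. funs l) \<inter> (\<Union>(l, r) \<in> R. funs r) = {}"

definition collapsing :: "('f, 'v) rule \<Rightarrow> bool" where
  "collapsing \<mu> \<longleftrightarrow> (\<exists>x. snd \<mu> = Var x)"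

type_synonym ('f, 'v) step = "('f, 'v) iterm \<times> nat list \<times> ('f, 'v) rule \<times> ('v \<Rightarrow> ('f, 'v) iterm)"

definition is_step :: "'f set \<Rightarrow> ('f \<Rightarrow> nat) \<Rightarrow> ('f, 'v) rule set \<Rightarrow> ('f, 'v) step \<Rightarrow> bool" where
  "is_step \<Sigma> ar R a \<longleftrightarrow> (case a of (t, p, (l, r), \<sigma>) \<Rightarrow>
     wf_term \<Sigma> ar t \<and> (l, r) \<in> R \<and> subt t p = Some (subst \<sigma> l))"

definition src :: "('f, 'v) step \<Rightarrow> ('f, 'v) iterm" where
  "src a = fst a"

definition tgt :: "('f, 'v) step \<Rightarrow> ('f, 'v) iterm" where
  "tgt a = (case a of (t, p, (l, r), \<sigma>) \<Rightarrow> replace t p (subst \<sigma> r))"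

definition depth :: "('f, 'v) step \<Rightarrow> nat" where
  "depth a = length (fst (snd a))"

text \<open>Ordinals are represented by elements of an arbitrary well-ordered type \<open>'o\<close>;
  a sequence of length \<open>\<beta>\<close> is indexed by \<open>{\<alpha>. \<alpha> < \<beta>}\<close>.\<close>

definition is_succ :: "'o::wellorder \<Rightarrow> bool" where
  "is_succ \<beta> \<longleftrightarrow> (\<exists>\<gamma><\<beta>. \<not> (\<exists>\<delta>. \<gamma> < \<delta> \<and> \<delta> < \<beta>))"

definition is_limit :: "'o::wellorder \<Rightarrow> bool" where
  "is_limit \<beta> \<longleftrightarrow> (\<exists>\<gamma>. \<gamma> < \<beta>) \<and> \<not> is_succ \<beta>"

definition converges_to :: "('o::wellorder \<Rightarrow> ('f, 'v) iterm) \<Rightarrow> 'o \<Rightarrow> ('f, 'v) iterm \<Rightarrow> bool" where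
  "converges_to f \<beta> t \<longleftrightarrow>
     (\<forall>e>0. \<exists>\<beta>'<\<beta>. \<forall>\<alpha>. \<beta>' < \<alpha> \<and> \<alpha> < \<beta> \<longrightarrow> dterm (f \<alpha>) t < e)"

definition depth_cond :: "('o::wellorder \<Rightarrow> ('f, 'v) step) \<Rightarrow> 'o \<Rightarrow> bool" where
  "depth_cond a \<beta> \<longleftrightarrow>
     (\<forall>n::nat. \<exists>\<beta>'<\<beta>. \<forall>\<alpha>. \<beta>' < \<alpha> \<and> \<alpha> < \<beta> \<longrightarrow> depth (a \<alpha>) > n)"

text \<open>A reduction sequence of length \<open>\<beta>\<close> (the empty one when \<open>\<beta>\<close> is the least element).\<close>
definition red_seq :: "'f set \<Rightarrow> ('f \<Rightarrow> nat) \<Rightarrow> ('f, 'v) rule set \<Rightarrow>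
    'o::wellorder \<Rightarrow> ('o \<Rightarrow> ('f, 'v) step) \<Rightarrow> bool" where
  "red_seq \<Sigma> ar R \<beta> a \<longleftrightarrow>
     (\<forall>\<alpha><\<beta>. is_step \<Sigma> ar R (a \<alpha>)) \<and>
     (\<forall>\<alpha> \<gamma>. \<gamma> < \<beta> \<and> \<alpha> < \<gamma> \<and> \<not> (\<exists>\<delta>. \<alpha> < \<delta> \<and> \<delta> < \<gamma>) \<longrightarrow> src (a \<gamma>) = tgt (a \<alpha>)) \<and>
     (\<forall>\<beta>0<\<beta>. is_limit \<beta>0 \<longrightarrow>
        converges_to (\<lambda>\<alpha>. tgt (a \<alpha>)) \<beta>0 (src (a \<beta>0)) \<and> depth_cond a \<beta>0)"

definition convergent :: "'o::wellorder \<Rightarrow> ('o \<Rightarrow> ('f, 'v) step) \<Rightarrow> bool" where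
  "convergent \<beta> a \<longleftrightarrow>
     \<not> (\<exists>\<gamma>. \<gamma> < \<beta>) \<or> is_succ \<beta> \<or>
     (is_limit \<beta> \<and> (\<exists>t. converges_to (\<lambda>\<alpha>. tgt (a \<alpha>)) \<beta> t) \<and> depth_cond a \<beta>)"

end

theory Submission imports Defs "HOL-Library.Sublist" begin

text \<open>A contraction at position \<open>p\<close> leaves at \<open>p\<close> the root symbol of a right-hand side
  (no rule is collapsing), and by disjointness such a symbol is never the root of a redex.
  Hence between two contractions at the same position some step must occur strictly above it.
  Towards a limit ordinal \<open>\<beta>\<close>, suppose that eventually all steps have depth at least \<open>n\<close>.
  From then on, the steps of depth exactly \<open>n\<close> take place at positions of one fixed term,
  of which there are finitely many, and each position is used at most once; so eventually
  all steps have depth greater than \<open>n\<close>. The depths therefore tend to infinity, the labels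
  of the terms up to any fixed depth become stable, and the sequence converges.\<close>

lemma lab_Nil [simp]: "lab t [] = Some (root t)"
  by (simp add: lab_def)

lemma lab_Var_Cons [simp]: "lab (Var x) (i # q) = None"
  by (simp add: lab_def)

lemma lab_Fun_Cons [simp]:
  "lab (Fun f ts) (i # q) = (if i < length ts then lab (ts ! i) q else None)"
  by (simp add: lab_def)

lemma iterm_eqI_lab: "\<forall>p. lab t p = lab u p \<Longrightarrow> t = u"
proof (coinduction arbitrary: t u)
  case Eq_iterm
  have r: "root t = root u" using Eq_iterm[rule_format, of "[]"] by simp
  show ?case
  proof (cases t)
    case (Var x)
    then show ?thesis using r by (cases u) auto
  next
    case (Fun f ts)
    then obtain us where u: "u = Fun f us" and l: "length us = length ts"
      using r by (cases u) auto
    have "list_all2 (\<lambda>a b. \<exists>t u. a = t \<and> b = u \<and> (\<forall>p. lab t p = lab u p)) ts us"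
    proof (rule list_all2_all_nthI)
      fix i assume "i < length ts"
      then show "\<exists>t' u'. ts ! i = t' \<and> us ! i = u' \<and> (\<forall>p. lab t' p = lab u' p)"
        using Eq_iterm Fun u l by (metis lab_Fun_Cons)
    qed (use l in simp)
    then show ?thesis using Fun u by simp
  qed
qed

lemma lab_replace_not_prefix: "\<not> prefix p q \<Longrightarrow> lab (replace t p s) q = lab t q"
proof (induction p arbitrary: t q)
  case Nil
  then show ?case by simp
next
  case (Cons i p)
  then show ?case
    by (cases t; cases q) (auto simp: nth_list_update)
qed

lemma subt_replace_same: "subt t p \<noteq> None \<Longrightarrow> subt (replace t p s) p = Some s"
proof (induction p arbitrary: t)
  case Nil
  then show ?case by simp
next
  case (Cons i p)
  then show ?case by (cases t) (auto split: if_splits)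
qed

lemma subt_defined_if_lab_eq_above:
  assumes "\<And>p'. strict_prefix p' p \<Longrightarrow> lab u p' = lab t p'" and "subt t p \<noteq> None"
  shows "subt u p \<noteq> None"
  using assms
proof (induction p arbitrary: t u)
  case Nil
  then show ?case by simp
next
  case (Cons i p)
  have r: "root u = root t" using Cons.prems(1)[of "[]"] by simp
  obtain f ts where t: "t = Fun f ts" and i: "i < length ts" and s: "subt (ts ! i) p \<noteq> None"
    using Cons.prems(2) by (cases t) (auto split: if_splits)
  obtain us where u: "u = Fun f us" and l: "length us = length ts"
    using r t by (cases u) auto
  have "lab (us ! i) p' = lab (ts ! i) p'" if "strict_prefix p' p" for p'
    using Cons.prems(1)[of "i # p'"] that t u l i by simp
  then have "subt (us ! i) p \<noteq> None" using Cons.IH s by blast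
  then show ?case using u l i by simp
qed

lemma finite_positions_of_length: "finite {q. length q = n \<and> subt t q \<noteq> None}"
proof (induction n arbitrary: t)
  case 0
  then show ?case by simp
next
  case (Suc n)
  show ?case
  proof (cases t)
    case (Var x)
    then have "{q. length q = Suc n \<and> subt t q \<noteq> None} = {}"
      by (auto simp: length_Suc_conv)
    then show ?thesis by (metis finite.emptyI)
  next
    case (Fun f ts)
    have "{q. length q = Suc n \<and> subt t q \<noteq> None} \<subseteq>
       (\<Union>i<length ts. (#) i ` {q. length q = n \<and> subt (ts ! i) q \<noteq> None})"
      using Fun by (auto simp: length_Suc_conv split: if_splits)
    moreover have "finite (\<Union>i<length ts. (#) i ` {q. length q = n \<and> subt (ts ! i) q \<noteq> None})"
      using Suc.IH by blast
    ultimately show ?thesis by (rule finite_subset)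
  qed
qed

lemma dterm_less_power:
  assumes "\<And>p. length p \<le> n \<Longrightarrow> lab t p = lab u p"
  shows "dterm t u < (1/2) ^ n"
proof (cases "t = u")
  case True
  then show ?thesis by (simp add: dterm_def)
next
  case False
  let ?P = "\<lambda>k. \<exists>p. length p = k \<and> lab t p \<noteq> lab u p"
  obtain p where "lab t p \<noteq> lab u p" using False iterm_eqI_lab by blast
  then have "?P (LEAST k. ?P k)" by (intro LeastI) blast
  then have "n < (LEAST k. ?P k)" using assms by (metis not_le)
  then have "(1/2::real) ^ (LEAST k. ?P k) < (1/2) ^ n"
    by (intro power_strict_decreasing) auto
  then show ?thesis using False by (simp add: dterm_def)
qed

lemma lab_eq_if_dterm_less_power:
  assumes "dterm t u < (1/2) ^ n" and "length p \<le> n"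
  shows "lab t p = lab u p"
proof (rule ccontr)
  assume ne: "lab t p \<noteq> lab u p"
  let ?P = "\<lambda>k. \<exists>p. length p = k \<and> lab t p \<noteq> lab u p"
  have "(LEAST k. ?P k) \<le> length p" using ne by (intro Least_le) blast
  then have "(LEAST k. ?P k) \<le> n" using assms(2) by simp
  then have "(1/2::real) ^ n \<le> (1/2) ^ (LEAST k. ?P k)"
    by (intro power_decreasing) auto
  moreover have "t \<noteq> u" using ne by auto
  ultimately show False using assms(1) by (simp add: dterm_def)
qed

definition child :: "nat \<Rightarrow> ('f, 'v) iterm \<Rightarrow> ('f, 'v) iterm" where
  "child i t = (case t of Fun f ts \<Rightarrow> ts ! i | Var x \<Rightarrow> t)"

definition lab_coherent :: "(nat \<Rightarrow> ('f, 'v) iterm) \<Rightarrow> bool" where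
  "lab_coherent g \<longleftrightarrow> (\<forall>k p. length p \<le> k \<longrightarrow> lab (g k) p = lab (g (Suc k)) p)"

text \<open>For a coherent sequence, the term whose labels at depth \<open>k\<close> are those of \<open>g k\<close>.\<close>
corec lim_term :: "(nat \<Rightarrow> ('f, 'v) iterm) \<Rightarrow> ('f, 'v) iterm" where
  "lim_term g = (case g 0 of Var x \<Rightarrow> Var x
     | Fun h ts \<Rightarrow> Fun h (map (\<lambda>i. lim_term (\<lambda>k. child i (g (Suc k)))) [0..<length ts]))"

lemma lab_coherent_le:
  assumes "lab_coherent g" and "length p \<le> k"
  shows "lab (g k) p = lab (g (length p)) p"
  using assms(2)
proof (induction k rule: dec_induct)
  case (step k)
  then show ?case using assms(1) unfolding lab_coherent_def by (metis Suc_le_mono le_SucI)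
qed simp

lemma lab_lim_term: "lab_coherent g \<Longrightarrow> lab (lim_term g) p = lab (g (length p)) p"
proof (induction p arbitrary: g)
  case Nil
  then show ?case by (subst lim_term.code) (cases "g 0"; simp)
next
  case (Cons i p)
  have root_g: "root (g m) = root (g 0)" for m
    using lab_coherent_le[OF Cons.prems, of "[]"] by simp
  show ?case
  proof (cases "g 0")
    case (Var x)
    then have "g (Suc (length p)) = Var x"
      using root_g[of "Suc (length p)"] by (cases "g (Suc (length p))") auto
    then show ?thesis using Var by (subst lim_term.code) simp
  next
    case (Fun h ts)
    have g_Suc: "\<exists>us. g (Suc k) = Fun h us \<and> length us = length ts" for k
      using root_g[of "Suc k"] Fun by (cases "g (Suc k)") auto
    show ?thesis
    proof (cases "i < length ts")
      case False
      then show ?thesis using Fun g_Suc[of "length p"] by (subst lim_term.code) auto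
    next
      case True
      define gi where "gi = (\<lambda>k. child i (g (Suc k)))"
      have lab_gi: "lab (gi k) p' = lab (g (Suc k)) (i # p')" for k p'
        using g_Suc[of k] True by (auto simp: gi_def child_def)
      have "lab_coherent gi"
        using Cons.prems unfolding lab_coherent_def lab_gi by (metis Suc_le_mono length_Cons)
      then have "lab (lim_term gi) p = lab (gi (length p)) p" using Cons.IH by blast
      moreover have "lab (lim_term g) (i # p) = lab (lim_term gi) p"
        using Fun True by (subst lim_term.code) (simp add: gi_def)
      ultimately show ?thesis by (simp add: lab_gi)
    qed
  qed
qed

lemma is_limit_dense:
  fixes \<beta> :: "'o::wellorder"
  assumes "is_limit \<beta>" and "\<gamma> < \<beta>"
  obtains \<delta> where "\<gamma> < \<delta>" and "\<delta> < \<beta>"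
  using assms unfolding is_limit_def is_succ_def by blast

text \<open>The limit is the \<open>lim_term\<close> of an \<open>\<omega>\<close>-sequence cofinal in the stable tails.\<close>
lemma converges_to_if_lab_stable:
  fixes f :: "'o::wellorder \<Rightarrow> ('f, 'v) iterm"
  assumes lim: "is_limit \<beta>"
    and stable: "\<And>n. \<exists>b<\<beta>. \<forall>\<alpha> \<gamma> q. b < \<alpha> \<longrightarrow> \<alpha> < \<beta> \<longrightarrow> b < \<gamma> \<longrightarrow> \<gamma> < \<beta> \<longrightarrow>
        length q \<le> n \<longrightarrow> lab (f \<alpha>) q = lab (f \<gamma>) q"
  shows "\<exists>t. converges_to f \<beta> t"
proof -
  obtain b where b_less: "\<And>n. b n < \<beta>"
    and b_stable: "\<And>n \<alpha> \<gamma> q. b n < \<alpha> \<Longrightarrow> \<alpha> < \<beta> \<Longrightarrow> b n < \<gamma> \<Longrightarrow> \<gamma> < \<beta> \<Longrightarrow>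
        length q \<le> n \<Longrightarrow> lab (f \<alpha>) q = lab (f \<gamma>) q"
    using stable by metis
  define B where "B k = Max (b ` {..k})" for k
  have B_less: "B k < \<beta>" for k unfolding B_def using b_less by (subst Max_less_iff) auto
  have b_le_B: "j \<le> k \<Longrightarrow> b j \<le> B k" for j k unfolding B_def by (intro Max_ge) auto
  have "\<forall>k. \<exists>\<delta>. B k < \<delta> \<and> \<delta> < \<beta>"
    using is_limit_dense[OF lim B_less] by metis
  then obtain s where s_gt: "\<And>k. B k < s k" and s_less: "\<And>k. s k < \<beta>"
    by metis
  have b_less_s: "j \<le> k \<Longrightarrow> b j < s k" for j k
    using b_le_B s_gt order.strict_trans1 by blast
  have "lab_coherent (f \<circ> s)"
    unfolding lab_coherent_def
  proof (intro allI impI)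
    fix k and p :: "nat list" assume "length p \<le> k"
    then show "lab ((f \<circ> s) k) p = lab ((f \<circ> s) (Suc k)) p"
      using b_stable[of k "s k" "s (Suc k)"] b_less_s s_less by simp
  qed
  then have lab_t: "lab (lim_term (f \<circ> s)) q = lab (f (s (length q))) q" for q
    by (simp add: lab_lim_term)
  have "converges_to f \<beta> (lim_term (f \<circ> s))"
    unfolding converges_to_def
  proof (intro allI impI)
    fix e :: real assume "e > 0"
    then obtain n where n: "(1/2::real) ^ n < e" using real_arch_pow_inv[of e "1/2"] by auto
    have "dterm (f \<alpha>) (lim_term (f \<circ> s)) < (1/2) ^ n" if "B n < \<alpha>" "\<alpha> < \<beta>" for \<alpha>
    proof (rule dterm_less_power)
      fix q :: "nat list" assume "length q \<le> n"
      then have "b (length q) < \<alpha>" using b_le_B that(1) order.strict_trans1 by blast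
      then show "lab (f \<alpha>) q = lab (lim_term (f \<circ> s)) q"
        unfolding lab_t using b_stable[of "length q" \<alpha> "s (length q)" q] b_less_s s_less that(2)
        by simp
    qed
    then show "\<exists>\<beta>'<\<beta>. \<forall>\<alpha>. \<beta>' < \<alpha> \<and> \<alpha> < \<beta> \<longrightarrow> dterm (f \<alpha>) (lim_term (f \<circ> s)) < e"
      using B_less n by force
  qed
  then show ?thesis by blast
qed

definition pos :: "('f, 'v) step \<Rightarrow> nat list" where
  "pos a = fst (snd a)"

definition lhs_funs :: "('f, 'v) rule set \<Rightarrow> 'f set" where
  "lhs_funs R = (\<Union>(l, r) \<in> R. funs l)"

definition rhs_funs :: "('f, 'v) rule set \<Rightarrow> 'f set" where
  "rhs_funs R = (\<Union>(l, r) \<in> R. funs r)"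

lemma depth_eq_length_pos: "depth a = length (pos a)"
  by (simp add: depth_def pos_def)

lemma funs_Fun: "f \<in> funs (Fun f ts)"
  unfolding funs_def by (auto intro: exI[of _ "[]"])

lemma root_subst_Fun: "root (subst \<sigma> (Fun f ts)) = Inl (f, length ts)"
  by (subst subst.code) simp

lemma subt_src_pos: "is_step \<Sigma> ar R a \<Longrightarrow> subt (src a) (pos a) \<noteq> None"
  by (auto simp: is_step_def src_def pos_def split: prod.splits)

lemma lab_tgt_not_prefix:
  assumes "is_step \<Sigma> ar R a" and "\<not> prefix (pos a) q"
  shows "lab (tgt a) q = lab (src a) q"
  using assms lab_replace_not_prefix
  by (auto simp: tgt_def src_def pos_def split: prod.splits)

lemma lab_src_pos_lhs_funs:
  assumes "is_trs \<Sigma> ar R" and "is_step \<Sigma> ar R a"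
  obtains g k where "lab (src a) (pos a) = Some (Inl (g, k))" and "g \<in> lhs_funs R"
proof -
  obtain t p l r \<sigma> where a: "a = (t, p, (l, r), \<sigma>)" by (metis prod.exhaust)
  have lr: "(l, r) \<in> R" and s: "subt t p = Some (subst \<sigma> l)"
    using assms(2) a by (auto simp: is_step_def)
  obtain g ls where l: "l = Fun g ls"
    using assms(1) lr unfolding is_trs_def by (cases l) auto
  have "g \<in> lhs_funs R" unfolding lhs_funs_def using lr l funs_Fun by fastforce
  moreover have "lab (src a) (pos a) = Some (Inl (g, length ls))"
    using s a l root_subst_Fun by (simp add: lab_def src_def pos_def)
  ultimately show ?thesis using that by blast
qed

lemma lab_tgt_pos_rhs_funs:
  assumes "\<forall>\<mu>\<in>R. \<not> collapsing \<mu>" and "is_step \<Sigma> ar R a"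
  obtains f k where "lab (tgt a) (pos a) = Some (Inl (f, k))" and "f \<in> rhs_funs R"
proof -
  obtain t p l r \<sigma> where a: "a = (t, p, (l, r), \<sigma>)" by (metis prod.exhaust)
  have lr: "(l, r) \<in> R" and s: "subt t p = Some (subst \<sigma> l)"
    using assms(2) a by (auto simp: is_step_def)
  obtain f rs where r: "r = Fun f rs"
    using assms(1) lr unfolding collapsing_def by (cases r) fastforce+
  have "f \<in> rhs_funs R" unfolding rhs_funs_def using lr r funs_Fun by fastforce
  moreover have "lab (tgt a) (pos a) = Some (Inl (f, length rs))"
    using a s r subt_replace_same[of t p] root_subst_Fun
    by (simp add: tgt_def lab_def pos_def)
  ultimately show ?thesis using that by blast
qed

lemma lab_src_pos_ne_lab_tgt_pos:
  assumes "is_trs \<Sigma> ar R" and "disjoint_trs R" and "\<forall>\<mu>\<in>R. \<not> collapsing \<mu>"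
    and "is_step \<Sigma> ar R a" and "is_step \<Sigma> ar R b"
  shows "lab (src b) (pos b) \<noteq> lab (tgt a) (pos a)"
proof -
  obtain g k where g: "lab (src b) (pos b) = Some (Inl (g, k))" "g \<in> lhs_funs R"
    using lab_src_pos_lhs_funs[OF assms(1,5)] .
  obtain f k' where f: "lab (tgt a) (pos a) = Some (Inl (f, k'))" "f \<in> rhs_funs R"
    using lab_tgt_pos_rhs_funs[OF assms(3,4)] .
  have "lhs_funs R \<inter> rhs_funs R = {}"
    using assms(2) by (simp add: disjoint_trs_def lhs_funs_def rhs_funs_def)
  then show ?thesis using f g by auto
qed

context
  fixes \<Sigma> :: "'f set" and ar :: "'f \<Rightarrow> nat" and R :: "('f, 'v) rule set"
    and \<beta> :: "'o::wellorder" and a :: "'o \<Rightarrow> ('f, 'v) step"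
  assumes red_seq: "red_seq \<Sigma> ar R \<beta> a"
begin

lemma red_seq_is_step: "\<alpha> < \<beta> \<Longrightarrow> is_step \<Sigma> ar R (a \<alpha>)"
  using red_seq by (simp add: red_seq_def)

text \<open>Limit stages are crossed using the convergence of the targets to the next source.\<close>
lemma red_seq_lab_preserved:
  assumes "\<gamma> < \<beta>" and "\<alpha> < \<gamma>"
    and "\<And>\<delta>. \<alpha> < \<delta> \<Longrightarrow> \<delta> < \<gamma> \<Longrightarrow> \<not> prefix (pos (a \<delta>)) q"
  shows "lab (src (a \<gamma>)) q = lab (tgt (a \<alpha>)) q"
  using assms
proof (induction \<gamma> rule: less_induct)
  case (less \<gamma>)
  have lab_tgt_src: "lab (tgt (a \<delta>)) q = lab (tgt (a \<alpha>)) q" if "\<alpha> < \<delta>" "\<delta> < \<gamma>" for \<delta>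
  proof -
    have "lab (tgt (a \<delta>)) q = lab (src (a \<delta>)) q"
      using lab_tgt_not_prefix red_seq_is_step less.prems that by (meson order.strict_trans)
    also have "\<dots> = lab (tgt (a \<alpha>)) q"
      using less.IH less.prems that by (meson order.strict_trans)
    finally show ?thesis .
  qed
  show ?case
  proof (cases "is_limit \<gamma>")
    case False
    then obtain \<delta> where \<delta>: "\<delta> < \<gamma>" "\<not> (\<exists>\<epsilon>. \<delta> < \<epsilon> \<and> \<epsilon> < \<gamma>)"
      using less.prems(2) unfolding is_limit_def is_succ_def by blast
    then have src_eq: "src (a \<gamma>) = tgt (a \<delta>)"
      using red_seq less.prems(1) unfolding red_seq_def by blast
    have "\<delta> = \<alpha> \<or> \<alpha> < \<delta>" using \<delta> less.prems(2) by (metis neqE)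
    then show ?thesis using src_eq lab_tgt_src \<delta>(1) by auto
  next
    case True
    then have "converges_to (\<lambda>\<alpha>. tgt (a \<alpha>)) \<gamma> (src (a \<gamma>))"
      using red_seq less.prems(1) unfolding red_seq_def by blast
    moreover have "(0::real) < (1/2) ^ length q" by simp
    ultimately obtain \<beta>' where "\<beta>' < \<gamma>"
      and close: "\<forall>\<delta>. \<beta>' < \<delta> \<and> \<delta> < \<gamma> \<longrightarrow> dterm (tgt (a \<delta>)) (src (a \<gamma>)) < (1/2) ^ length q"
      unfolding converges_to_def by blast
    then have "max \<beta>' \<alpha> < \<gamma>" using less.prems(2) by simp
    then obtain \<delta> where \<delta>: "max \<beta>' \<alpha> < \<delta>" "\<delta> < \<gamma>"
      using is_limit_dense[OF True] by blast
    then have "dterm (tgt (a \<delta>)) (src (a \<gamma>)) < (1/2) ^ length q"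
      using close by simp
    then have "lab (src (a \<gamma>)) q = lab (tgt (a \<delta>)) q"
      using lab_eq_if_dterm_less_power by (metis order.refl)
    then show ?thesis using lab_tgt_src \<delta> by simp
  qed
qed

text \<open>Take the first return to \<open>p\<close>: the label it rewrites is the right-hand-side symbol
  left by \<open>a \<alpha>\<close>, which cannot be a left-hand-side symbol.\<close>
lemma red_seq_no_return_to_pos:
  assumes "is_trs \<Sigma> ar R" and "disjoint_trs R" and "\<forall>\<mu>\<in>R. \<not> collapsing \<mu>"
    and "\<alpha> < \<gamma>" and "\<gamma> < \<beta>" and "pos (a \<gamma>) = pos (a \<alpha>)"
    and deep: "\<And>\<delta>. \<alpha> < \<delta> \<Longrightarrow> \<delta> < \<gamma> \<Longrightarrow> depth (a \<alpha>) \<le> depth (a \<delta>)"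
  shows False
proof -
  let ?p = "pos (a \<alpha>)"
  let ?P = "\<lambda>\<delta>. \<alpha> < \<delta> \<and> \<delta> \<le> \<gamma> \<and> pos (a \<delta>) = ?p"
  define \<gamma>' where "\<gamma>' = (LEAST \<delta>. ?P \<delta>)"
  have P\<gamma>': "?P \<gamma>'" unfolding \<gamma>'_def using assms(4,6) by (intro LeastI[of ?P \<gamma>]) auto
  have "\<not> prefix (pos (a \<delta>)) ?p" if "\<alpha> < \<delta>" "\<delta> < \<gamma>'" for \<delta>
  proof
    assume pre: "prefix (pos (a \<delta>)) ?p"
    moreover have "\<delta> < \<gamma>" using that(2) P\<gamma>' by (meson order.strict_trans2)
    then have "length ?p \<le> length (pos (a \<delta>))"
      using deep that(1) by (simp add: depth_eq_length_pos)
    ultimately have "?P \<delta>" using that P\<gamma>' prefix_length_prefix by fastforce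
    then have "\<gamma>' \<le> \<delta>" unfolding \<gamma>'_def by (rule Least_le)
    then show False using that by simp
  qed
  moreover have "\<gamma>' < \<beta>" "\<alpha> < \<beta>" using P\<gamma>' assms(5) by auto
  ultimately have "lab (src (a \<gamma>')) (pos (a \<gamma>')) = lab (tgt (a \<alpha>)) (pos (a \<alpha>))"
    using red_seq_lab_preserved P\<gamma>' by simp
  then show False
    using lab_src_pos_ne_lab_tgt_pos[OF assms(1-3)] red_seq_is_step \<open>\<gamma>' < \<beta>\<close> \<open>\<alpha> < \<beta>\<close>
    by blast
qed

lemma red_seq_pos_in_earlier_tgt:
  assumes "\<alpha>1 < \<alpha>" and "\<alpha> < \<beta>"
    and deep: "\<And>\<delta>. \<alpha>1 < \<delta> \<Longrightarrow> \<delta> < \<alpha> \<Longrightarrow> depth (a \<alpha>) \<le> depth (a \<delta>)"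
  shows "subt (tgt (a \<alpha>1)) (pos (a \<alpha>)) \<noteq> None"
proof (rule subt_defined_if_lab_eq_above)
  show "subt (src (a \<alpha>)) (pos (a \<alpha>)) \<noteq> None"
    using subt_src_pos red_seq_is_step assms(2) by blast
next
  fix p' assume p': "strict_prefix p' (pos (a \<alpha>))"
  have "\<not> prefix (pos (a \<delta>)) p'" if "\<alpha>1 < \<delta>" "\<delta> < \<alpha>" for \<delta>
    using deep[OF that] p' prefix_length_le prefix_length_less
    by (metis depth_eq_length_pos leD order.trans)
  then show "lab (tgt (a \<alpha>1)) p' = lab (src (a \<alpha>)) p'"
    using red_seq_lab_preserved assms(1,2) by simp
qed

lemma red_seq_eventually_deep:
  assumes "is_trs \<Sigma> ar R" and "disjoint_trs R" and "\<forall>\<mu>\<in>R. \<not> collapsing \<mu>"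
    and lim: "is_limit \<beta>"
  shows "\<exists>\<beta>'<\<beta>. \<forall>\<alpha>. \<beta>' < \<alpha> \<and> \<alpha> < \<beta> \<longrightarrow> n \<le> depth (a \<alpha>)"
proof (induction n)
  case 0
  then show ?case using lim unfolding is_limit_def by auto
next
  case (Suc n)
  then obtain \<beta>' where "\<beta>' < \<beta>" and ge_n: "\<forall>\<alpha>. \<beta>' < \<alpha> \<and> \<alpha> < \<beta> \<longrightarrow> n \<le> depth (a \<alpha>)"
    by blast
  then obtain \<alpha>1 where \<alpha>1: "\<beta>' < \<alpha>1" "\<alpha>1 < \<beta>" using is_limit_dense[OF lim] by blast
  have deep: "n \<le> depth (a \<delta>)" if "\<alpha>1 < \<delta>" "\<delta> < \<beta>" for \<delta>
    using ge_n \<alpha>1 that by (meson order.strict_trans)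
  define S where "S = {\<alpha>. \<alpha>1 < \<alpha> \<and> \<alpha> < \<beta> \<and> depth (a \<alpha>) = n}"
  have inj: "inj_on (\<lambda>\<alpha>. pos (a \<alpha>)) S"
  proof (rule linorder_inj_onI)
    fix \<alpha> \<gamma> assume "\<alpha> < \<gamma>" "\<alpha> \<in> S" "\<gamma> \<in> S"
    then show "pos (a \<alpha>) \<noteq> pos (a \<gamma>)"
      using red_seq_no_return_to_pos[OF assms(1-3), of \<alpha> \<gamma>] deep
      by (auto simp: S_def)
  qed (simp add: linear)
  have "(\<lambda>\<alpha>. pos (a \<alpha>)) ` S \<subseteq> {q. length q = n \<and> subt (tgt (a \<alpha>1)) q \<noteq> None}"
    using red_seq_pos_in_earlier_tgt deep
    by (auto simp: S_def depth_eq_length_pos[symmetric])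
  then have "finite ((\<lambda>\<alpha>. pos (a \<alpha>)) ` S)"
    using finite_positions_of_length by (rule finite_subset)
  then have "finite S"
    using inj by (simp add: finite_image_iff)
  define M where "M = Max (insert \<alpha>1 S)"
  have "M < \<beta>" using \<open>finite S\<close> \<alpha>1 by (auto simp: M_def S_def)
  have "Suc n \<le> depth (a \<alpha>)" if "M < \<alpha>" "\<alpha> < \<beta>" for \<alpha>
  proof -
    have "\<alpha>1 < \<alpha>" "\<alpha> \<notin> S" using \<open>finite S\<close> that(1) by (auto simp: M_def)
    then show ?thesis using deep[of \<alpha>] that(2) by (force simp: S_def)
  qed
  then show ?case using \<open>M < \<beta>\<close> by blast
qed

lemma red_seq_tgt_lab_stable:
  assumes "\<forall>\<delta>. b < \<delta> \<and> \<delta> < \<beta> \<longrightarrow> n < depth (a \<delta>)" and "length q \<le> n"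
    and "b < \<alpha>" and "\<alpha> < \<beta>" and "b < \<gamma>" and "\<gamma> < \<beta>"
  shows "lab (tgt (a \<alpha>)) q = lab (tgt (a \<gamma>)) q"
proof -
  have not_prefix: "\<not> prefix (pos (a \<delta>)) q" if "b < \<delta>" "\<delta> < \<beta>" for \<delta>
    using assms(1,2) that prefix_length_le
    by (metis depth_eq_length_pos leD le_trans)
  have ordered: "lab (tgt (a \<gamma>')) q = lab (tgt (a \<alpha>')) q"
    if "b < \<alpha>'" "\<alpha>' < \<gamma>'" "\<gamma>' < \<beta>" for \<alpha>' \<gamma>'
  proof -
    have "lab (tgt (a \<gamma>')) q = lab (src (a \<gamma>')) q"
      using lab_tgt_not_prefix red_seq_is_step not_prefix that by (meson order.strict_trans)
    also have "\<dots> = lab (tgt (a \<alpha>')) q"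
      using red_seq_lab_preserved not_prefix that by (meson order.strict_trans)
    finally show ?thesis .
  qed
  show ?thesis
    using ordered[of \<alpha> \<gamma>] ordered[of \<gamma> \<alpha>] assms(3-6)
    by (cases \<alpha> \<gamma> rule: linorder_cases) auto
qed

lemma red_seq_convergent_at_limit:
  assumes "is_trs \<Sigma> ar R" and "disjoint_trs R" and "\<forall>\<mu>\<in>R. \<not> collapsing \<mu>"
    and lim: "is_limit \<beta>"
  shows "convergent \<beta> a"
proof -
  have deep: "\<exists>b<\<beta>. \<forall>\<alpha>. b < \<alpha> \<and> \<alpha> < \<beta> \<longrightarrow> n < depth (a \<alpha>)" for n
    using red_seq_eventually_deep[OF assms, of "Suc n"] by (simp add: Suc_le_eq)
  then have "depth_cond a \<beta>" by (simp add: depth_cond_def)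
  moreover have "\<exists>t. converges_to (\<lambda>\<alpha>. tgt (a \<alpha>)) \<beta> t"
  proof (rule converges_to_if_lab_stable[OF lim])
    fix n
    obtain b where "b < \<beta>" and "\<forall>\<alpha>. b < \<alpha> \<and> \<alpha> < \<beta> \<longrightarrow> n < depth (a \<alpha>)"
      using deep by blast
    then show "\<exists>b<\<beta>. \<forall>\<alpha> \<gamma> q. b < \<alpha> \<longrightarrow> \<alpha> < \<beta> \<longrightarrow> b < \<gamma> \<longrightarrow> \<gamma> < \<beta> \<longrightarrow>
        length q \<le> n \<longrightarrow> lab (tgt (a \<alpha>)) q = lab (tgt (a \<gamma>)) q"
      using red_seq_tgt_lab_stable by blast
  qed
  ultimately show ?thesis using lim by (simp add: convergent_def)
qed

end

theorem mainTheorem11: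
  fixes \<Sigma> :: "'f set" and ar :: "'f \<Rightarrow> nat" and R :: "('f, 'v) rule set"
  assumes "is_trs \<Sigma> ar R"
    and "disjoint_trs R"
    and "\<forall>\<mu>\<in>R. \<not> collapsing \<mu>"
  shows "\<forall>(\<beta>::'o::wellorder) a. red_seq \<Sigma> ar R \<beta> a \<longrightarrow> convergent \<beta> a"
proof (intro allI impI)
  fix \<beta> :: 'o and a assume red_seq: "red_seq \<Sigma> ar R \<beta> a"
  show "convergent \<beta> a"
  proof (cases "is_limit \<beta>")
    case True
    then show ?thesis using red_seq_convergent_at_limit[OF red_seq assms] by blast
  next
    case False
    then show ?thesis unfolding convergent_def is_limit_def by blast
  qed
qed

end
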